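(* For any $x,y\in\mathbb{R}^n$, $$\big\langle x-y,\ \mathbb{E}_{\mathbb{S}}[(a_{i^*}^Ty-b_{i^*})^+a_{i^*}]\big\rangle=\langle x-y,\nabla f(y)\rangle\le f(x)-f(y)\le\frac{\mu_2}{2}d(x,P)^2-\frac{\mu_1}{2}d(y,P)^2,$$ where in the expectation $i^*$ is selected at the point $y$.
   Context: Let $A\in\mathbb{R}^{m\times n}$ have rows $a_1^T,\dots,a_m^T$ with $\|a_i\|_2=1$, and $b\in\mathbb{R}^m$; assume $Ax\le b$ is consistent and let $P=\{x:Ax\le b\}$, $\mathcal{P}(x)$ the Euclidean projection onto $P$, $d(x,P)=\|x-\mathcal{P}(x)\|$, $t^+=\max\{t,0\}$. Fix an integer $1\le\beta\le m$. Sampling distribution $\mathbb{S}$ at a point $u$: $\tau\subseteq\{1,\dots,m\}$ with $|\tau|=\beta$ uniformly at random, and $i^*\in\tau$ maximizing $(a_i^Tu-b_i)^+$ over $\tau$; $\mathbb{E}_{\mathbb{S}}$ is expectation over $\tau$. $f(u)=\mathbb{E}_{\mathbb{S}}[\frac12|(a_{i^*}^Tu-b_{i^*})^+|^2]$ and $\nabla f(u):=\mathbb{E}_{\mathbb{S}}[(a_{i^*}^Tu-b_{i^*})^+a_{i^*}]$ (with $i^*$ selected at $u$). $L>0$ is a Hoffman constant ($d(u,P)^2\le L^2\|(Au-b)^+\|^2$ for all $u$); $\mu_1=\frac1{mL^2}$, $\mu_2=\min\{1,\frac{\beta}{m}\lambda_{\max}(A^TA)\}$. *)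

theory Defs
  imports "HOL-Analysis.Analysis"
begin

text \<open>Rows of the matrix A are indexed by the finite type 'm (so m = CARD('m)),
  columns by 'n (so x lives in R^n = real^'n).\<close>

definition res :: "real^'n^'m \<Rightarrow> real^'m \<Rightarrow> real^'n \<Rightarrow> 'm \<Rightarrow> real" where
  "res A b u i = max (A $ i \<bullet> u - b $ i) 0"

definition pos_part_vec :: "real^'m \<Rightarrow> real^'m" where
  "pos_part_vec v = (\<chi> i. max (v $ i) 0)"

definition polyhedron :: "real^'n^'m \<Rightarrow> real^'m \<Rightarrow> (real^'n) set" where
  "polyhedron A b = {x. \<forall>i. A $ i \<bullet> x \<le> b $ i}"

definition samples :: "nat \<Rightarrow> 'm::finite set set" where
  "samples \<beta> = {\<tau>. card \<tau> = \<beta>}"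

definition Exp :: "nat \<Rightarrow> ('m::finite set \<Rightarrow> 'v::real_vector) \<Rightarrow> 'v" where
  "Exp \<beta> g = (1 / real (card (samples \<beta> :: 'm set set))) *\<^sub>R (\<Sum>\<tau>\<in>samples \<beta>. g \<tau>)"

definition is_sel :: "real^'n^'m \<Rightarrow> real^'m \<Rightarrow> nat \<Rightarrow> real^'n \<Rightarrow> ('m::finite set \<Rightarrow> 'm) \<Rightarrow> bool" where
  "is_sel A b \<beta> u sel \<longleftrightarrow>
     (\<forall>\<tau>\<in>samples \<beta>. sel \<tau> \<in> \<tau> \<and> (\<forall>j\<in>\<tau>. res A b u j \<le> res A b u (sel \<tau>)))"

text \<open>f(u) = E[1/2 ((a_{i*}^T u - b_{i*})^+)^2], i* selected at u; the value does not
  depend on tie-breaking, so it is the maximum residual over tau.\<close>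
definition fobj :: "real^'n^'m \<Rightarrow> real^'m \<Rightarrow> nat \<Rightarrow> real^'n \<Rightarrow> real" where
  "fobj A b \<beta> u = Exp \<beta> (\<lambda>\<tau>::'m::finite set. (Max (res A b u ` \<tau>))\<^sup>2 / 2)"

definition grad :: "real^'n^'m \<Rightarrow> real^'m \<Rightarrow> nat \<Rightarrow> real^'n \<Rightarrow> ('m::finite set \<Rightarrow> 'm) \<Rightarrow> real^'n" where
  "grad A b \<beta> u sel = Exp \<beta> (\<lambda>\<tau>. res A b u (sel \<tau>) *\<^sub>R (A $ sel \<tau>))"

definition lambda_max :: "real^'n^'n \<Rightarrow> real" where
  "lambda_max M = Max {c. \<exists>v. v \<noteq> 0 \<and> M *v v = c *\<^sub>R v}"

end

theory Submission
  imports Defs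
begin

(* Write r_i(u) = (a_i^T u - b_i)^+. For a sample tau, u |-> (max_{i in tau} r_i(u))^2 / 2 is
   convex and r_{i*}(y) a_{i*} is a subgradient of it at y, so averaging the gradient inequality
   of t |-> (t^+)^2 / 2 over the samples gives the first inequality.
   For the second, (max_{i in tau} r_i)^2 lies between (1/beta) sum_{i in tau} r_i^2 and
   sum_{i in tau} r_i^2, and double counting turns E sum_{i in tau} into (beta/m) sum_i.
   At y, Hoffman's bound gives sum_i r_i(y)^2 >= d(y,P)^2 / L^2. At x, with p the projection
   of x onto P, r_i(x) <= |a_i^T (x - p)|, which is at most d(x,P) for unit rows, and
   sum_i r_i(x)^2 <= |A (x - p)|^2 <= lambda_max(A^T A) d(x,P)^2 because the maximum of the
   Rayleigh quotient is an eigenvalue. *)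

lemma card_samples: "card (samples \<beta> :: 'm::finite set set) = CARD('m) choose \<beta>"
  using n_subsets[of "UNIV :: 'm set" \<beta>] unfolding samples_def by simp

lemma samples_member:
  assumes "\<tau> \<in> samples \<beta>" "1 \<le> \<beta>"
  obtains i where "i \<in> \<tau>"
  using assms unfolding samples_def by fastforce

lemma card_samples_containing:
  fixes i :: "'m::finite"
  assumes "1 \<le> \<beta>"
  shows "card {\<tau> \<in> samples \<beta>. i \<in> \<tau>} = (CARD('m) - 1) choose (\<beta> - 1)"
proof -
  let ?R = "{\<sigma>. \<sigma> \<subseteq> - {i} \<and> card \<sigma> = \<beta> - 1}"
  have "{\<tau> \<in> samples \<beta>. i \<in> \<tau>} = insert i ` ?R"
  proof (intro set_eqI iffI)
    fix \<tau> assume "\<tau> \<in> {\<tau> \<in> samples \<beta>. i \<in> \<tau>}"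
    then have "\<tau> = insert i (\<tau> - {i})" "\<tau> - {i} \<in> ?R"
      by (auto simp: samples_def)
    then show "\<tau> \<in> insert i ` ?R" by blast
  qed (use assms in \<open>auto simp: samples_def\<close>)
  moreover have "inj_on (insert i) ?R"
    by (rule inj_onI) (metis Diff_insert_absorb ComplD insertCI mem_Collect_eq subsetD)
  moreover have "card (- {i}) = CARD('m) - 1"
    by (simp add: Compl_eq_Diff_UNIV card_Diff_singleton)
  ultimately show ?thesis
    using n_subsets[of "- {i}" "\<beta> - 1"] by (simp add: card_image)
qed

lemma Exp_real:
  "Exp \<beta> (g :: 'm::finite set \<Rightarrow> real) = (\<Sum>\<tau>\<in>samples \<beta>. g \<tau>) / real (card (samples \<beta> :: 'm set set))"
  unfolding Exp_def by simp

lemma Exp_mono: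
  fixes g h :: "'m::finite set \<Rightarrow> real"
  assumes "\<And>\<tau>. \<tau> \<in> samples \<beta> \<Longrightarrow> g \<tau> \<le> h \<tau>"
  shows "Exp \<beta> g \<le> Exp \<beta> h"
  unfolding Exp_real using assms by (intro divide_right_mono sum_mono) auto

lemma Exp_diff: "Exp \<beta> (\<lambda>\<tau>. g \<tau> - h \<tau>) = Exp \<beta> g - Exp \<beta> h"
  unfolding Exp_def by (simp add: sum_subtractf scaleR_diff_right)

lemma Exp_const:
  assumes "\<beta> \<le> CARD('m::finite)"
  shows "Exp \<beta> (\<lambda>_ :: 'm set. c) = c"
  unfolding Exp_def sum_constant_scaleR card_samples using assms by simp

lemma inner_Exp: "z \<bullet> Exp \<beta> g = Exp \<beta> (\<lambda>\<tau>. z \<bullet> g \<tau>)"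
  unfolding Exp_def by (simp add: inner_sum_right)

text \<open>Double counting: each index lies in the same number \<open>(m-1) choose (\<beta>-1)\<close> of samples.\<close>
lemma Exp_sum_over_sample:
  fixes g :: "'m::finite \<Rightarrow> real"
  assumes "1 \<le> \<beta>" "\<beta> \<le> CARD('m)"
  shows "Exp \<beta> (\<lambda>\<tau>. \<Sum>i\<in>\<tau>. g i) = real \<beta> / real CARD('m) * (\<Sum>i\<in>UNIV. g i)"
proof -
  have "(\<Sum>\<tau>\<in>samples \<beta>. \<Sum>i\<in>\<tau>. g i) = (\<Sum>\<tau>\<in>samples \<beta>. \<Sum>i\<in>UNIV. if i \<in> \<tau> then g i else 0)"
    (is "?L = _")
    by (rule sum.cong) (auto simp: sum.If_cases)
  also have "\<dots> = (\<Sum>i\<in>UNIV. real (card {\<tau> \<in> samples \<beta>. i \<in> \<tau>}) * g i)"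
    by (subst sum.swap) (simp add: sum.If_cases Int_def)
  also have "\<dots> = real ((CARD('m) - 1) choose (\<beta> - 1)) * (\<Sum>i\<in>UNIV. g i)"
    by (simp add: card_samples_containing[OF assms(1)] sum_distrib_left)
  finally have "?L = real ((CARD('m) - 1) choose (\<beta> - 1)) * (\<Sum>i\<in>UNIV. g i)" .
  moreover have "real \<beta> * real (CARD('m) choose \<beta>) = real CARD('m) * real ((CARD('m) - 1) choose (\<beta> - 1))"
    using times_binomial_minus1_eq[of \<beta> "CARD('m)"] assms(1) by (simp flip: of_nat_mult)
  moreover have "CARD('m) choose \<beta> > 0"
    using assms(2) by simp
  ultimately show ?thesis
    unfolding Exp_real card_samples by (simp add: field_simps)
qed

lemma Max_sq_le_sum_sq:
  fixes g :: "'a \<Rightarrow> real"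
  assumes "finite \<tau>" "i \<in> \<tau>" "\<And>i. i \<in> \<tau> \<Longrightarrow> 0 \<le> g i"
  shows "(Max (g ` \<tau>))\<^sup>2 \<le> (\<Sum>i\<in>\<tau>. (g i)\<^sup>2)"
proof -
  have "Max (g ` \<tau>) \<in> g ` \<tau>"
    using assms(1,2) by (intro Max_in) auto
  then obtain j where "j \<in> \<tau>" "Max (g ` \<tau>) = g j"
    by blast
  then show ?thesis
    using assms by (auto intro: member_le_sum)
qed

lemma sum_sq_le_card_Max_sq:
  fixes g :: "'a \<Rightarrow> real"
  assumes "finite \<tau>" "\<And>i. i \<in> \<tau> \<Longrightarrow> 0 \<le> g i"
  shows "(\<Sum>i\<in>\<tau>. (g i)\<^sup>2) \<le> real (card \<tau>) * (Max (g ` \<tau>))\<^sup>2"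
  using assms by (intro sum_bounded_above power_mono Max_ge) auto

text \<open>\<open>t \<mapsto> (t\<^sup>+)\<^sup>2 / 2\<close> is convex with derivative \<open>t\<^sup>+\<close>.\<close>
lemma pos_part_sq_gradient_inequality:
  fixes s t :: real
  shows "max t 0 * (s - t) \<le> (max s 0)\<^sup>2 / 2 - (max t 0)\<^sup>2 / 2"
proof -
  have "0 \<le> (s - t)\<^sup>2" "t \<le> 0 \<or> 0 < t \<and> s \<le> 0 \<or> 0 < t \<and> 0 < s" by auto
  then show ?thesis
    by (auto simp: power2_eq_square algebra_simps mult_pos_neg)
qed

lemma symmetric_matrix_inner:
  fixes B :: "real^'n^'n"
  assumes "transpose B = B"
  shows "(B *v u) \<bullet> w = u \<bullet> (B *v w)"
  by (metis assms dot_lmul_matrix transpose_matrix_vector)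

lemma finite_eigenvalues_symmetric:
  fixes B :: "real^'n^'n"
  assumes sym: "transpose B = B"
  shows "finite {c. \<exists>v. v \<noteq> 0 \<and> B *v v = c *\<^sub>R v}" (is "finite ?S")
proof -
  define e where "e c = (SOME v. v \<noteq> 0 \<and> B *v v = c *\<^sub>R v)" for c
  have e: "e c \<noteq> 0 \<and> B *v e c = c *\<^sub>R e c" if "c \<in> ?S" for c
    using someI_ex[OF that[unfolded mem_Collect_eq]] unfolding e_def .
  have inj: "inj_on e ?S"
  proof (rule inj_onI)
    fix c c' assume c: "c \<in> ?S" and c': "c' \<in> ?S" and eq: "e c = e c'"
    have "c *\<^sub>R e c = c' *\<^sub>R e c"
      using e[OF c] e[OF c'] unfolding eq by simp
    then show "c = c'" using e[OF c] by simp
  qed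
  have orth: "e c \<bullet> e c' = 0" if c: "c \<in> ?S" and c': "c' \<in> ?S" and "c \<noteq> c'" for c c'
  proof -
    have "c * (e c \<bullet> e c') = (B *v e c) \<bullet> e c'" using e[OF c] by simp
    also have "\<dots> = c' * (e c \<bullet> e c')"
      using e[OF c'] symmetric_matrix_inner[OF sym] by simp
    finally show ?thesis using \<open>c \<noteq> c'\<close> by simp
  qed
  have "independent (e ` ?S)"
  proof (rule pairwise_orthogonal_independent)
    show "pairwise orthogonal (e ` ?S)"
    proof (rule pairwiseI)
      fix u w assume "u \<in> e ` ?S" "w \<in> e ` ?S" "u \<noteq> w"
      then obtain c c' where "c \<in> ?S" "c' \<in> ?S" "c \<noteq> c'" "u = e c" "w = e c'"
        by blast
      then show "orthogonal u w"
        unfolding orthogonal_def by (simp add: orth)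
    qed
    show "0 \<notin> e ` ?S"
      using e by force
  qed
  then have "finite (e ` ?S)" by (rule finiteI_independent)
  then show ?thesis using inj finite_imageD by blast
qed

lemma quadratic_form_attains_max_on_sphere:
  fixes B :: "real^'n^'n"
  obtains v where "norm v = 1" "\<And>w. w \<bullet> (B *v w) \<le> (v \<bullet> (B *v v)) * (norm w)\<^sup>2"
proof -
  let ?q = "\<lambda>w. w \<bullet> (B *v w)"
  obtain u :: "real^'n" where "norm u = 1"
    using vector_choose_size[of 1] by auto
  then have "sphere (0::real^'n) 1 \<noteq> {}" by auto
  moreover have "continuous_on (sphere 0 1) ?q"
    by (intro continuous_intros)
  ultimately obtain v where v: "v \<in> sphere 0 1" and max: "\<forall>w\<in>sphere 0 1. ?q w \<le> ?q v"
    using continuous_attains_sup[OF compact_sphere] by blast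
  have "?q w \<le> ?q v * (norm w)\<^sup>2" for w
  proof (cases "w = 0")
    case False
    then have "inverse (norm w) *\<^sub>R w \<in> sphere 0 1" by simp
    then have "?q (inverse (norm w) *\<^sub>R w) \<le> ?q v" using max by blast
    moreover have "?q (inverse (norm w) *\<^sub>R w) = ?q w / (norm w)\<^sup>2"
      by (simp add: matrix_vector_mult_scaleR power2_eq_square divide_inverse)
    ultimately show ?thesis using False by (simp add: divide_le_eq)
  qed simp
  with v that show ?thesis by simp
qed

text \<open>The Rayleigh quotient is stationary at a maximiser: the nonnegative quadratic form
  \<open>M |w|^2 - w \<bullet> B w\<close> vanishes at \<open>v\<close>, so its gradient \<open>2 (M v - B v)\<close> vanishes there too.\<close>
lemma rayleigh_maximiser_is_eigenvector:
  fixes B :: "real^'n^'n"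
  assumes sym: "transpose B = B"
    and le: "\<And>w. w \<bullet> (B *v w) \<le> M * (norm w)\<^sup>2"
    and eq: "v \<bullet> (B *v v) = M * (norm v)\<^sup>2"
  shows "B *v v = M *\<^sub>R v"
proof (rule ccontr)
  define z where "z = B *v v - M *\<^sub>R v"
  define Q where "Q = M * (norm z)\<^sup>2 - z \<bullet> (B *v z)"
  assume "B *v v \<noteq> M *\<^sub>R v"
  then have zz: "z \<bullet> z > 0" unfolding z_def by simp
  have Q: "Q \<ge> 0" using le[of z] unfolding Q_def by simp
  have Bvz: "v \<bullet> (B *v z) = M * (v \<bullet> z) + z \<bullet> z"
    using symmetric_matrix_inner[OF sym, of v z] unfolding z_def
    by (simp add: inner_diff_left inner_commute)
  have expand: "M * (norm (v + t *\<^sub>R z))\<^sup>2 - (v + t *\<^sub>R z) \<bullet> (B *v (v + t *\<^sub>R z))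
      = - 2 * t * (z \<bullet> z) + t\<^sup>2 * Q" for t
  proof -
    have "(v + t *\<^sub>R z) \<bullet> (B *v (v + t *\<^sub>R z))
        = v \<bullet> (B *v v) + 2 * t * (v \<bullet> (B *v z)) + t\<^sup>2 * (z \<bullet> (B *v z))"
      using symmetric_matrix_inner[OF sym, of v z]
      by (simp add: inner_commute[of z] power2_eq_square algebra_simps)
    moreover have "(norm (v + t *\<^sub>R z))\<^sup>2 = (norm v)\<^sup>2 + 2 * t * (v \<bullet> z) + t\<^sup>2 * (norm z)\<^sup>2"
      unfolding power2_norm_eq_inner by (simp add: inner_commute[of z v] power2_eq_square algebra_simps)
    ultimately show ?thesis
      using eq Bvz unfolding Q_def by (simp add: algebra_simps)
  qed
  define t where "t = (z \<bullet> z) / (Q + 1)"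
  have "t > 0" "t * Q < 2 * (z \<bullet> z)"
    unfolding t_def using zz Q by (simp_all add: divide_less_eq)
  then have "t\<^sup>2 * Q < 2 * t * (z \<bullet> z)"
    by (simp add: power2_eq_square mult.assoc)
  then show False using le[of "v + t *\<^sub>R z"] expand[of t] by linarith
qed

lemma quadratic_form_le_lambda_max:
  fixes B :: "real^'n^'n"
  assumes sym: "transpose B = B"
  shows "w \<bullet> (B *v w) \<le> lambda_max B * (norm w)\<^sup>2"
proof -
  obtain v where v: "norm v = 1" and le: "\<And>w. w \<bullet> (B *v w) \<le> (v \<bullet> (B *v v)) * (norm w)\<^sup>2"
    using quadratic_form_attains_max_on_sphere[of B] by blast
  have "B *v v = (v \<bullet> (B *v v)) *\<^sub>R v"
    using v by (intro rayleigh_maximiser_is_eigenvector[OF sym le]) simp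
  then have "v \<bullet> (B *v v) \<in> {c. \<exists>v. v \<noteq> 0 \<and> B *v v = c *\<^sub>R v}"
    using v by (intro CollectI exI[of _ v]) auto
  then have "v \<bullet> (B *v v) \<le> lambda_max B"
    unfolding lambda_max_def using finite_eigenvalues_symmetric[OF sym] by (rule Max_ge[rotated])
  then show ?thesis
    using le[of w] by (meson mult_right_mono order_trans zero_le_power2)
qed

lemma norm_matrix_vector_le_lambda_max:
  fixes A :: "real^'n^'m"
  shows "(norm (A *v v))\<^sup>2 \<le> lambda_max (transpose A ** A) * (norm v)\<^sup>2"
proof -
  have "(norm (A *v v))\<^sup>2 = v \<bullet> ((transpose A ** A) *v v)"
    by (simp add: power2_norm_eq_inner matrix_vector_mul_assoc[symmetric] dot_lmul_matrix[symmetric] inner_commute)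
  also have "\<dots> \<le> lambda_max (transpose A ** A) * (norm v)\<^sup>2"
    by (intro quadratic_form_le_lambda_max) (simp add: matrix_transpose_mul)
  finally show ?thesis .
qed

lemma res_nonneg: "0 \<le> res A b u i"
  unfolding res_def by simp

lemma sum_res_sq_eq_norm_pos_part:
  "(\<Sum>i\<in>UNIV. (res A b u i)\<^sup>2) = (norm (pos_part_vec (A *v u - b)))\<^sup>2"
  unfolding power2_norm_eq_inner pos_part_vec_def res_def
  by (simp add: inner_vec_def matrix_vector_mult_def power2_eq_square mult.commute)

lemma closed_polyhedron: "closed (polyhedron A b)"
  unfolding polyhedron_def
  by (intro closed_Collect_all closed_Collect_le continuous_intros)

lemma res_le_abs_inner_diff:
  assumes "p \<in> polyhedron A b"
  shows "res A b x i \<le> \<bar>A $ i \<bullet> (x - p)\<bar>"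
proof -
  have "A $ i \<bullet> p \<le> b $ i"
    using assms unfolding polyhedron_def by blast
  then show ?thesis
    unfolding res_def inner_diff_right by arith
qed

lemma res_le_dist:
  assumes "norm (A $ i) = 1" "p \<in> polyhedron A b"
  shows "res A b x i \<le> dist x p"
proof -
  have "res A b x i \<le> \<bar>A $ i \<bullet> (x - p)\<bar>"
    by (rule res_le_abs_inner_diff[OF assms(2)])
  also have "\<dots> \<le> norm (A $ i) * norm (x - p)"
    by (rule Cauchy_Schwarz_ineq2)
  finally show ?thesis
    using assms(1) by (simp add: dist_norm)
qed

lemma sum_res_sq_le_lambda_max:
  assumes "p \<in> polyhedron A b"
  shows "(\<Sum>i\<in>UNIV. (res A b x i)\<^sup>2) \<le> lambda_max (transpose A ** A) * (dist x p)\<^sup>2"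
proof -
  have "(\<Sum>i\<in>UNIV. (res A b x i)\<^sup>2) \<le> (\<Sum>i\<in>UNIV. (A $ i \<bullet> (x - p))\<^sup>2)"
    by (intro sum_mono) (metis res_le_abs_inner_diff[OF assms] res_nonneg power_mono power2_abs)
  also have "\<dots> = (norm (A *v (x - p)))\<^sup>2"
    unfolding power2_norm_eq_inner
    by (simp add: inner_vec_def matrix_vector_mult_def power2_eq_square)
  also have "\<dots> \<le> lambda_max (transpose A ** A) * (dist x p)\<^sup>2"
    unfolding dist_norm by (rule norm_matrix_vector_le_lambda_max)
  finally show ?thesis .
qed

lemma fobj_le_sum_res_sq:
  fixes A :: "real^'n^'m"
  assumes "1 \<le> \<beta>" "\<beta> \<le> CARD('m)"
  shows "fobj A b \<beta> u \<le> real \<beta> / real CARD('m) * (\<Sum>i\<in>UNIV. (res A b u i)\<^sup>2) / 2"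
proof -
  have "fobj A b \<beta> u \<le> Exp \<beta> (\<lambda>\<tau>. \<Sum>i\<in>\<tau>. (res A b u i)\<^sup>2 / 2)"
    unfolding fobj_def
  proof (rule Exp_mono)
    fix \<tau> :: "'m set" assume "\<tau> \<in> samples \<beta>"
    then obtain i where "i \<in> \<tau>" using assms(1) by (rule samples_member)
    then have "(Max (res A b u ` \<tau>))\<^sup>2 \<le> (\<Sum>i\<in>\<tau>. (res A b u i)\<^sup>2)"
      by (intro Max_sq_le_sum_sq res_nonneg) simp_all
    then show "(Max (res A b u ` \<tau>))\<^sup>2 / 2 \<le> (\<Sum>i\<in>\<tau>. (res A b u i)\<^sup>2 / 2)"
      by (simp add: sum_divide_distrib[symmetric])
  qed
  also have "\<dots> = real \<beta> / real CARD('m) * (\<Sum>i\<in>UNIV. (res A b u i)\<^sup>2) / 2"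
    unfolding Exp_sum_over_sample[OF assms] by (simp add: sum_divide_distrib[symmetric])
  finally show ?thesis .
qed

lemma sum_res_sq_le_fobj:
  fixes A :: "real^'n^'m"
  assumes "1 \<le> \<beta>" "\<beta> \<le> CARD('m)"
  shows "(\<Sum>i\<in>UNIV. (res A b u i)\<^sup>2) / real CARD('m) / 2 \<le> fobj A b \<beta> u"
proof -
  have "(\<Sum>i\<in>UNIV. (res A b u i)\<^sup>2) / real CARD('m) / 2
      = Exp \<beta> (\<lambda>\<tau>. \<Sum>i\<in>\<tau>. (res A b u i)\<^sup>2 / (2 * real \<beta>))"
    unfolding Exp_sum_over_sample[OF assms] using assms(1) by (simp add: sum_divide_distrib[symmetric])
  also have "\<dots> \<le> fobj A b \<beta> u"
    unfolding fobj_def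
  proof (rule Exp_mono)
    fix \<tau> :: "'m set" assume "\<tau> \<in> samples \<beta>"
    then have "card \<tau> = \<beta>" unfolding samples_def by simp
    moreover have "(\<Sum>i\<in>\<tau>. (res A b u i)\<^sup>2) \<le> real (card \<tau>) * (Max (res A b u ` \<tau>))\<^sup>2"
      by (intro sum_sq_le_card_Max_sq res_nonneg) simp
    ultimately have "(\<Sum>i\<in>\<tau>. (res A b u i)\<^sup>2) \<le> real \<beta> * (Max (res A b u ` \<tau>))\<^sup>2"
      by simp
    then show "(\<Sum>i\<in>\<tau>. (res A b u i)\<^sup>2 / (2 * real \<beta>)) \<le> (Max (res A b u ` \<tau>))\<^sup>2 / 2"
      using assms(1) by (simp add: sum_divide_distrib[symmetric] divide_le_eq mult.commute)
  qed
  finally show ?thesis .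
qed

lemma fobj_le_infdist_sq:
  fixes A :: "real^'n^'m"
  assumes rows: "\<forall>i. norm (A $ i) = 1" and "polyhedron A b \<noteq> {}"
    and "1 \<le> \<beta>" "\<beta> \<le> CARD('m)"
  shows "fobj A b \<beta> x \<le> (infdist x (polyhedron A b))\<^sup>2 / 2"
proof -
  obtain p where p: "p \<in> polyhedron A b" "infdist x (polyhedron A b) = dist x p"
    using infdist_attains_inf[OF closed_polyhedron assms(2)] by blast
  have "fobj A b \<beta> x \<le> Exp \<beta> (\<lambda>_ :: 'm set. (dist x p)\<^sup>2 / 2)"
    unfolding fobj_def
  proof (rule Exp_mono)
    fix \<tau> :: "'m set" assume "\<tau> \<in> samples \<beta>"
    then obtain i where "i \<in> \<tau>" using assms(3) by (rule samples_member)
    then have "Max (res A b x ` \<tau>) \<le> dist x p"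
      using res_le_dist[OF _ p(1)] rows by (subst Max_le_iff) auto
    moreover have "0 \<le> Max (res A b x ` \<tau>)"
      by (rule order_trans[OF res_nonneg Max_ge]) (use \<open>i \<in> \<tau>\<close> in auto)
    ultimately show "(Max (res A b x ` \<tau>))\<^sup>2 / 2 \<le> (dist x p)\<^sup>2 / 2"
      by (intro divide_right_mono power_mono) auto
  qed
  then show ?thesis
    unfolding Exp_const[OF assms(4)] p(2) .
qed

lemma fobj_le_lambda_max_infdist_sq:
  fixes A :: "real^'n^'m"
  assumes "polyhedron A b \<noteq> {}" "1 \<le> \<beta>" "\<beta> \<le> CARD('m)"
  shows "fobj A b \<beta> x
    \<le> real \<beta> / real CARD('m) * lambda_max (transpose A ** A) / 2 * (infdist x (polyhedron A b))\<^sup>2"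
proof -
  obtain p where p: "p \<in> polyhedron A b" "infdist x (polyhedron A b) = dist x p"
    using infdist_attains_inf[OF closed_polyhedron assms(1)] by blast
  have "fobj A b \<beta> x \<le> real \<beta> / real CARD('m) * (\<Sum>i\<in>UNIV. (res A b x i)\<^sup>2) / 2"
    by (rule fobj_le_sum_res_sq[OF assms(2,3)])
  also have "\<dots> \<le> real \<beta> / real CARD('m) * (lambda_max (transpose A ** A) * (dist x p)\<^sup>2) / 2"
    by (intro divide_right_mono mult_left_mono sum_res_sq_le_lambda_max[OF p(1)]) auto
  finally show ?thesis
    unfolding p(2) by simp
qed

lemma hoffman_infdist_sq_le_fobj:
  fixes A :: "real^'n^'m"
  assumes "1 \<le> \<beta>" "\<beta> \<le> CARD('m)" "L > 0"
    and hoffman: "(infdist y (polyhedron A b))\<^sup>2 \<le> L\<^sup>2 * (norm (pos_part_vec (A *v y - b)))\<^sup>2"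
  shows "1 / (real CARD('m) * L\<^sup>2) / 2 * (infdist y (polyhedron A b))\<^sup>2 \<le> fobj A b \<beta> y"
proof -
  have "1 / (real CARD('m) * L\<^sup>2) / 2 * (infdist y (polyhedron A b))\<^sup>2
      \<le> 1 / (real CARD('m) * L\<^sup>2) / 2 * (L\<^sup>2 * (\<Sum>i\<in>UNIV. (res A b y i)\<^sup>2))"
    using hoffman by (intro mult_left_mono) (auto simp: sum_res_sq_eq_norm_pos_part)
  also have "\<dots> = (\<Sum>i\<in>UNIV. (res A b y i)\<^sup>2) / real CARD('m) / 2"
    using assms(3) by simp
  also have "\<dots> \<le> fobj A b \<beta> y"
    by (rule sum_res_sq_le_fobj[OF assms(1,2)])
  finally show ?thesis .
qed

lemma inner_grad_le_fobj_diff: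
  fixes A :: "real^'n^'m"
  assumes sel: "is_sel A b \<beta> y sel"
  shows "(x - y) \<bullet> grad A b \<beta> y sel \<le> fobj A b \<beta> x - fobj A b \<beta> y"
proof -
  have "(x - y) \<bullet> grad A b \<beta> y sel = Exp \<beta> (\<lambda>\<tau>. (x - y) \<bullet> (res A b y (sel \<tau>) *\<^sub>R A $ sel \<tau>))"
    unfolding grad_def inner_Exp ..
  also have "\<dots> \<le> Exp \<beta> (\<lambda>\<tau>. (Max (res A b x ` \<tau>))\<^sup>2 / 2 - (Max (res A b y ` \<tau>))\<^sup>2 / 2)"
  proof (rule Exp_mono)
    fix \<tau> :: "'m set" assume "\<tau> \<in> samples \<beta>"
    then have s: "sel \<tau> \<in> \<tau>" "\<forall>j\<in>\<tau>. res A b y j \<le> res A b y (sel \<tau>)"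
      using sel unfolding is_sel_def by auto
    then have max_y: "Max (res A b y ` \<tau>) = res A b y (sel \<tau>)"
      by (intro Max_eqI) auto
    have "(res A b x (sel \<tau>))\<^sup>2 \<le> (Max (res A b x ` \<tau>))\<^sup>2"
      using s(1) res_nonneg by (intro power_mono Max_ge) auto
    moreover have "(x - y) \<bullet> (res A b y (sel \<tau>) *\<^sub>R A $ sel \<tau>)
        \<le> (res A b x (sel \<tau>))\<^sup>2 / 2 - (res A b y (sel \<tau>))\<^sup>2 / 2"
      using pos_part_sq_gradient_inequality[of "A $ sel \<tau> \<bullet> y - b $ sel \<tau>" "A $ sel \<tau> \<bullet> x - b $ sel \<tau>"]
      unfolding res_def by (simp add: inner_diff_left inner_commute)
    ultimately show "(x - y) \<bullet> (res A b y (sel \<tau>) *\<^sub>R A $ sel \<tau>)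
        \<le> (Max (res A b x ` \<tau>))\<^sup>2 / 2 - (Max (res A b y ` \<tau>))\<^sup>2 / 2"
      unfolding max_y by linarith
  qed
  also have "\<dots> = fobj A b \<beta> x - fobj A b \<beta> y"
    unfolding fobj_def by (rule Exp_diff)
  finally show ?thesis .
qed

theorem lemma7:
  fixes A :: "real^'n^'m" and b :: "real^'m" and \<beta> :: nat and L :: real
    and x y :: "real^'n" and sel :: "'m set \<Rightarrow> 'm"
  assumes rows: "\<forall>i. norm (A $ i) = 1"
    and consistent: "polyhedron A b \<noteq> {}"
    and beta: "1 \<le> \<beta>" "\<beta> \<le> CARD('m)"
    and Lpos: "L > 0"
    and hoffman: "\<forall>u. (infdist u (polyhedron A b))\<^sup>2 \<le> L\<^sup>2 * (norm (pos_part_vec (A *v u - b)))\<^sup>2"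
    and sel: "is_sel A b \<beta> y sel"
  shows "(x - y) \<bullet> Exp \<beta> (\<lambda>\<tau>. max (A $ sel \<tau> \<bullet> y - b $ sel \<tau>) 0 *\<^sub>R (A $ sel \<tau>))
           = (x - y) \<bullet> grad A b \<beta> y sel
       \<and> (x - y) \<bullet> grad A b \<beta> y sel \<le> fobj A b \<beta> x - fobj A b \<beta> y
       \<and> fobj A b \<beta> x - fobj A b \<beta> y
           \<le> (min 1 (real \<beta> / real CARD('m) * lambda_max (transpose A ** A))) / 2
                * (infdist x (polyhedron A b))\<^sup>2
             - (1 / (real CARD('m) * L\<^sup>2)) / 2 * (infdist y (polyhedron A b))\<^sup>2"
proof -
  have "fobj A b \<beta> x
      \<le> (min 1 (real \<beta> / real CARD('m) * lambda_max (transpose A ** A))) / 2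
          * (infdist x (polyhedron A b))\<^sup>2"
    using fobj_le_infdist_sq[OF rows consistent beta]
      fobj_le_lambda_max_infdist_sq[OF consistent beta]
    by (simp add: min_divide_distrib_right min_mult_distrib_right)
  moreover have "1 / (real CARD('m) * L\<^sup>2) / 2 * (infdist y (polyhedron A b))\<^sup>2 \<le> fobj A b \<beta> y"
    using hoffman by (intro hoffman_infdist_sq_le_fobj[OF beta Lpos]) blast
  moreover have "(x - y) \<bullet> Exp \<beta> (\<lambda>\<tau>. max (A $ sel \<tau> \<bullet> y - b $ sel \<tau>) 0 *\<^sub>R (A $ sel \<tau>))
      = (x - y) \<bullet> grad A b \<beta> y sel"
    unfolding grad_def res_def ..
  ultimately show ?thesis
    using inner_grad_le_fobj_diff[OF sel, of x] by linarith
qed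

end
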